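(* Let $W\in\mathbb{R}^{n\times m}$ with rows $w_1,\dots,w_n$, let $u\in\mathbb{R}^{1\times n}$, and let $a\le b$ be real numbers. Call a pair $(\Delta x,\Delta\sigma)\in\mathbb{R}^m\times\mathbb{R}^n$ admissible if $\Delta x\neq0$ and for every $i\in[n]$, $$\begin{pmatrix}w_i\Delta x\\ \Delta\sigma_i\end{pmatrix}^T\begin{pmatrix}-2ab& a+b\\ a+b&-2\end{pmatrix}\begin{pmatrix}w_i\Delta x\\ \Delta\sigma_i\end{pmatrix}\ge 0 .$$ Then $$\sup_{(\Delta x,\Delta\sigma)\ \text{admissible}}\frac{(u\Delta\sigma)^2}{\langle\Delta x,\Delta x\rangle}=\max_{y\in[a,b]^n}\big\|W^T\mathrm{diag}(y)u^T\big\|_2^2 .$$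
   Context: $\mathrm{diag}(y)$ is the diagonal matrix with diagonal $y$. The constraint on $(w_i\Delta x,\Delta\sigma_i)$ is equivalent to $(\Delta\sigma_i-a\,w_i\Delta x)(\Delta\sigma_i-b\,w_i\Delta x)\le0$, i.e. it encodes that the $i$-th activation has slope in $[a,b]$. *)

theory Defs
  imports "HOL-Analysis.Analysis"
begin

text \<open>Rows of W are indexed by 'n; W :: real^'m^'n, so (W *v dx)$i = w_i dx.\<close>

definition admissible ::
  "real \<Rightarrow> real \<Rightarrow> real^'m^'n \<Rightarrow> real^'m \<Rightarrow> real^'n \<Rightarrow> bool" where
  "admissible a b W dx ds \<longleftrightarrow> dx \<noteq> 0 \<and>
     (\<forall>i. (let p = (W *v dx) $ i; q = ds $ i in
        p * (-2*a*b * p + (a+b) * q) + q * ((a+b) * p + (-2) * q) \<ge> 0))"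

definition diag_mul :: "real^'n \<Rightarrow> real^'n \<Rightarrow> real^'n" where
  "diag_mul y u = (\<chi> i. y $ i * u $ i)"

definition box_ab :: "real \<Rightarrow> real \<Rightarrow> (real^'n) set" where
  "box_ab a b = {y. \<forall>i. a \<le> y $ i \<and> y $ i \<le> b}"

end

theory Submission
  imports Defs
begin

text \<open>The quadratic constraint says exactly that \<open>\<Delta>\<sigma>\<^sub>i = y\<^sub>i w\<^sub>i\<Delta>x\<close> for some
  slope \<open>y \<in> [a,b]\<^sup>n\<close>, and then \<open>u\<Delta>\<sigma> = \<langle>W\<^sup>T diag(y) u\<^sup>T, \<Delta>x\<rangle>\<close>. For fixed \<open>y\<close> the
  supremum over \<open>\<Delta>x\<close> of \<open>\<langle>v,\<Delta>x\<rangle>\<^sup>2/\<langle>\<Delta>x,\<Delta>x\<rangle>\<close> is \<open>\<parallel>v\<parallel>\<^sup>2\<close> by Cauchy-Schwarz,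
  attained at \<open>\<Delta>x = v\<close>; so the supremum over admissible pairs is the supremum of
  \<open>\<parallel>W\<^sup>T diag(y) u\<^sup>T\<parallel>\<^sup>2\<close> over the box, which is a maximum by compactness.\<close>

lemma sector_iff_slope:
  fixes a b p q :: real
  assumes "a \<le> b"
  shows "p * (-2*a*b * p + (a+b) * q) + q * ((a+b) * p + (-2) * q) \<ge> 0
         \<longleftrightarrow> (\<exists>y. a \<le> y \<and> y \<le> b \<and> q = y * p)"
proof -
  have "p * (-2*a*b * p + (a+b) * q) + q * ((a+b) * p + (-2) * q) = -2 * ((q - a*p) * (q - b*p))"
    by (simp add: algebra_simps)
  then have sector: "p * (-2*a*b * p + (a+b) * q) + q * ((a+b) * p + (-2) * q) \<ge> 0
                     \<longleftrightarrow> (q - a*p) * (q - b*p) \<le> 0"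
    by linarith
  show ?thesis
  proof (cases "p = 0")
    case True
    then show ?thesis unfolding sector using assms by (auto simp: mult_le_0_iff)
  next
    case False
    have "(q - a*p) * (q - b*p) = p\<^sup>2 * ((q/p - a) * (q/p - b))"
      using False by (simp add: field_simps power2_eq_square)
    moreover have "(q/p - a) * (q/p - b) \<le> 0 \<longleftrightarrow> a \<le> q/p \<and> q/p \<le> b"
      using assms by (auto simp: mult_le_0_iff)
    moreover have "(\<exists>y. a \<le> y \<and> y \<le> b \<and> q = y * p) \<longleftrightarrow> a \<le> q/p \<and> q/p \<le> b"
      using False by auto
    ultimately show ?thesis unfolding sector using False by (simp add: mult_le_0_iff)
  qed
qed

lemma admissible_iff_slopes:
  assumes "a \<le> b"
  shows "admissible a b W dx ds \<longleftrightarrow>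
           dx \<noteq> 0 \<and> (\<exists>y \<in> box_ab a b. ds = diag_mul y (W *v dx))"
proof -
  have "(\<forall>i. \<exists>y. a \<le> y \<and> y \<le> b \<and> ds $ i = y * (W *v dx) $ i)
        \<longleftrightarrow> (\<exists>y \<in> box_ab a b. ds = diag_mul y (W *v dx))"
  proof
    assume "\<forall>i. \<exists>y. a \<le> y \<and> y \<le> b \<and> ds $ i = y * (W *v dx) $ i"
    then obtain y where "\<forall>i. a \<le> y i \<and> y i \<le> b \<and> ds $ i = y i * (W *v dx) $ i"
      by metis
    then show "\<exists>y \<in> box_ab a b. ds = diag_mul y (W *v dx)"
      by (intro bexI[of _ "\<chi> i. y i"]) (auto simp: box_ab_def diag_mul_def vec_eq_iff)
  qed (auto simp: box_ab_def diag_mul_def)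
  then show ?thesis
    unfolding admissible_def Let_def sector_iff_slope[OF assms] by simp
qed

lemma inner_diag_mul_transpose:
  fixes W :: "real^'m^'n"
  shows "u \<bullet> diag_mul y (W *v x) = (transpose W *v diag_mul y u) \<bullet> x"
proof -
  have "u \<bullet> diag_mul y (W *v x) = diag_mul y u \<bullet> (W *v x)"
    by (simp add: diag_mul_def inner_vec_def algebra_simps)
  also have "\<dots> = (diag_mul y u v* W) \<bullet> x"
    by (rule dot_lmul_matrix[symmetric])
  finally show ?thesis
    using vector_transpose_matrix[of _ "transpose W"] by simp
qed

lemma SUP_inner_square_ratio:
  fixes v :: "'a::euclidean_space"
  shows "(SUP x \<in> - {0}. ereal ((v \<bullet> x)\<^sup>2 / (x \<bullet> x))) = ereal ((norm v)\<^sup>2)"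
proof (rule SUP_eqI)
  fix x :: 'a
  assume "x \<in> - {0}"
  then have "x \<bullet> x > 0" by simp
  moreover have "(v \<bullet> x)\<^sup>2 \<le> (norm v)\<^sup>2 * (x \<bullet> x)"
    using power_mono[OF Cauchy_Schwarz_ineq2[of v x], of 2]
    by (simp add: power_mult_distrib power2_norm_eq_inner)
  ultimately show "ereal ((v \<bullet> x)\<^sup>2 / (x \<bullet> x)) \<le> ereal ((norm v)\<^sup>2)"
    by (simp add: divide_le_eq)
next
  fix z
  assume ub: "\<And>x. x \<in> - {0} \<Longrightarrow> ereal ((v \<bullet> x)\<^sup>2 / (x \<bullet> x)) \<le> z"
  obtain e :: 'a where "e \<in> Basis" using nonempty_Basis by blast
  then have "e \<noteq> 0" by auto
  define x where "x = (if v = 0 then e else v)"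
  have "x \<noteq> 0" using \<open>e \<noteq> 0\<close> by (simp add: x_def)
  moreover have "(v \<bullet> x)\<^sup>2 / (x \<bullet> x) = (norm v)\<^sup>2"
    by (simp add: x_def dot_square_norm power2_eq_square)
  ultimately show "ereal ((norm v)\<^sup>2) \<le> z" using ub[of x] by simp
qed

lemma SUP_admissible_eq_SUP_box:
  fixes W :: "real^'m^'n" and u :: "real^'n"
  assumes "a \<le> b"
  shows "(SUP p \<in> {(dx, ds). admissible a b W dx ds}. ereal ((u \<bullet> snd p)\<^sup>2 / (fst p \<bullet> fst p)))
         = (SUP y \<in> box_ab a b. ereal ((norm (transpose W *v diag_mul y u))\<^sup>2))"
    (is "(SUP p \<in> ?A. ?g p) = (SUP y \<in> _. ?f y)")
proof (rule antisym)
  show "(SUP p \<in> ?A. ?g p) \<le> (SUP y \<in> box_ab a b. ?f y)"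
  proof (rule SUP_least)
    fix p
    assume "p \<in> ?A"
    then have "admissible a b W (fst p) (snd p)"
      by (simp add: case_prod_beta)
    then obtain y :: "real^'n" where y: "y \<in> box_ab a b" and "fst p \<noteq> 0"
      and ds: "snd p = diag_mul y (W *v fst p)"
      unfolding admissible_iff_slopes[OF assms] by blast
    have "?g p = ereal (((transpose W *v diag_mul y u) \<bullet> fst p)\<^sup>2 / (fst p \<bullet> fst p))"
      by (simp add: ds inner_diag_mul_transpose)
    also have "\<dots> \<le> (SUP x \<in> - {0}. ereal (((transpose W *v diag_mul y u) \<bullet> x)\<^sup>2 / (x \<bullet> x)))"
      using \<open>fst p \<noteq> 0\<close> by (intro SUP_upper) simp
    also have "\<dots> = ?f y"
      by (rule SUP_inner_square_ratio)
    also have "\<dots> \<le> (SUP y \<in> box_ab a b. ?f y)"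
      using y by (rule SUP_upper)
    finally show "?g p \<le> (SUP y \<in> box_ab a b. ?f y)" .
  qed
  show "(SUP y \<in> box_ab a b. ?f y) \<le> (SUP p \<in> ?A. ?g p)"
  proof (rule SUP_least)
    fix y :: "real^'n"
    assume y: "y \<in> box_ab a b"
    have "?f y = (SUP x \<in> - {0}. ereal (((transpose W *v diag_mul y u) \<bullet> x)\<^sup>2 / (x \<bullet> x)))"
      by (rule SUP_inner_square_ratio[symmetric])
    also have "\<dots> \<le> (SUP p \<in> ?A. ?g p)"
    proof (rule SUP_least)
      fix dx :: "real^'m"
      assume "dx \<in> - {0}"
      then have "(dx, diag_mul y (W *v dx)) \<in> ?A"
        using admissible_iff_slopes[OF assms] y by auto
      then have "?g (dx, diag_mul y (W *v dx)) \<le> (SUP p \<in> ?A. ?g p)"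
        by (rule SUP_upper)
      then show "ereal (((transpose W *v diag_mul y u) \<bullet> dx)\<^sup>2 / (dx \<bullet> dx)) \<le> (SUP p \<in> ?A. ?g p)"
        by (simp add: inner_diag_mul_transpose)
    qed
    finally show "?f y \<le> (SUP p \<in> ?A. ?g p)" .
  qed
qed

lemma norm_transpose_diag_mul_attains_max:
  fixes W :: "real^'m^'n" and u :: "real^'n"
  assumes "a \<le> b"
  obtains y0 where "y0 \<in> box_ab a b"
    and "\<And>y. y \<in> box_ab a b \<Longrightarrow>
           (norm (transpose W *v diag_mul y u))\<^sup>2 \<le> (norm (transpose W *v diag_mul y0 u))\<^sup>2"
proof -
  have "box_ab a b = (cbox (vec a) (vec b) :: (real^'n) set)"
    by (auto simp: box_ab_def mem_box_cart)
  then have "compact (box_ab a b :: (real^'n) set)"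
    by simp
  moreover have "(box_ab a b :: (real^'n) set) \<noteq> {}"
    using assms by (auto simp: box_ab_def intro!: exI[of _ "vec a"])
  moreover have "continuous_on (box_ab a b) (\<lambda>y. (norm (transpose W *v diag_mul y u))\<^sup>2)"
    unfolding diag_mul_def
    by (intro continuous_intros linear_continuous_on matrix_vector_mul_bounded_linear
          continuous_on_compose2[OF linear_continuous_on[OF matrix_vector_mul_bounded_linear]]) auto
  ultimately have "\<exists>y0 \<in> box_ab a b. \<forall>y \<in> box_ab a b.
      (norm (transpose W *v diag_mul y u))\<^sup>2 \<le> (norm (transpose W *v diag_mul y0 u))\<^sup>2"
    by (rule continuous_attains_sup)
  then show ?thesis
    using that by blast
qed

theorem mainTheorem7:
  fixes W :: "real^'m^'n" and u :: "real^'n" and a b :: real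
  assumes "a \<le> b"
  shows "\<exists>y0 \<in> box_ab a b.
           (\<forall>y \<in> box_ab a b. (norm (transpose W *v diag_mul y u))^2
                              \<le> (norm (transpose W *v diag_mul y0 u))^2) \<and>
           (SUP p \<in> {(dx, ds). admissible a b W dx ds}.
              ereal ((u \<bullet> snd p)^2 / (fst p \<bullet> fst p)))
           = ereal ((norm (transpose W *v diag_mul y0 u))^2)"
proof -
  obtain y0 where y0: "y0 \<in> box_ab a b"
    and max: "\<And>y. y \<in> box_ab a b \<Longrightarrow>
           (norm (transpose W *v diag_mul y u))\<^sup>2 \<le> (norm (transpose W *v diag_mul y0 u))\<^sup>2"
    using norm_transpose_diag_mul_attains_max[OF assms, where W = W and u = u] by blast
  have "(SUP p \<in> {(dx, ds). admissible a b W dx ds}. ereal ((u \<bullet> snd p)\<^sup>2 / (fst p \<bullet> fst p)))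
        = (SUP y \<in> box_ab a b. ereal ((norm (transpose W *v diag_mul y u))\<^sup>2))"
    by (rule SUP_admissible_eq_SUP_box[OF assms])
  also have "\<dots> = ereal ((norm (transpose W *v diag_mul y0 u))\<^sup>2)"
    using y0 max by (intro cSup_eq_maximum) auto
  finally have "(SUP p \<in> {(dx, ds). admissible a b W dx ds}.
      ereal ((u \<bullet> snd p)\<^sup>2 / (fst p \<bullet> fst p))) = ereal ((norm (transpose W *v diag_mul y0 u))\<^sup>2)" .
  moreover have "\<forall>y \<in> box_ab a b.
      (norm (transpose W *v diag_mul y u))\<^sup>2 \<le> (norm (transpose W *v diag_mul y0 u))\<^sup>2"
    using max by blast
  ultimately show ?thesis
    using y0 by (intro bexI[of _ y0] conjI)
qed

end
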